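(* Assume (A1). Then there is a function $\varepsilon_f\colon\mathbb{R}_+\to\mathbb{R}_+$ with $\varepsilon_f(r)\to0$ as $r\to\infty$ such that for every $\theta\in\mathbb{R}^d$, every initial condition $\Phi_0\in\Omega$, every $T>0$ and every $\alpha>0$, $$\left\|\frac1T\int_0^T\big[f(\theta,\xi^\alpha_t)-\bar f(\theta)\big]\,dt\right\|\le\big(1+\|\theta\|\big)\,\varepsilon_f(T/\alpha),$$ where $\xi^\alpha_t=\xi_{t/\alpha}$.
   Context: Setting. Fix $d,m,K\ge1$, frequencies $\omega_i>0$, phases $\phi_i$; clock process $\frac{d}{dt}\Phi_t=W\Phi_t$, $W=2\pi j\,\mathrm{diag}(\omega_i)$, $\Phi^i_t=\exp(2\pi j[\omega_it+\phi_i])$; $\Omega$ the closure of its orbit (compact, flow invariant, any point may be the initial condition), $\pi$ the uniform (Haar) probability on $\Omega$. Probing signal $\xi_t=G(\Phi_t)$ with $G(z)=G_0((z+1/z)/2)$, $G_0\colon\mathbb{R}^K\to\mathbb{R}^m$ analytic with absolutely summable Taylor coefficients. $f\colon\mathbb{R}^d\times\mathbb{R}^m\to\mathbb{R}^d$ continuous, $\bar f(\theta)=\int_\Omega f(\theta,G(z))\pi(dz)$. (A1): there is $L_f$ with $\|\bar f(\theta')-\bar f(\theta)\|\le L_f\|\theta'-\theta\|$ and $\|f(\theta',\xi)-f(\theta,\xi)\|+\|f(\theta,\xi')-f(\theta,\xi)\|\le L_f[\|\theta'-\theta\|+\|\xi'-\xi\|]$. *)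

theory Defs
  imports "HOL-Probability.Probability"
begin

definition clock :: "real^'k \<Rightarrow> real^'k \<Rightarrow> real \<Rightarrow> complex^'k" where
  "clock \<omega> \<phi> t = (\<chi> i. cis (2 * pi * (\<omega>$i * t + \<phi>$i)))"

text \<open>Flow of d/dt Phi = W Phi, W = 2 pi j diag(omega), started at z0.\<close>
definition clock_flow :: "real^'k \<Rightarrow> real \<Rightarrow> complex^'k \<Rightarrow> complex^'k" where
  "clock_flow \<omega> t z0 = (\<chi> i. cis (2 * pi * \<omega>$i * t) * z0$i)"

definition clock_Omega :: "real^'k \<Rightarrow> real^'k \<Rightarrow> (complex^'k) set" where
  "clock_Omega \<omega> \<phi> = closure (range (clock \<omega> \<phi>))"

text \<open>The closed subgroup H of the torus generated by the flow; Omega is a coset of H.\<close>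
definition clock_group :: "real^'k \<Rightarrow> (complex^'k) set" where
  "clock_group \<omega> = closure (range (\<lambda>t. (\<chi> i. cis (2 * pi * \<omega>$i * t)) :: complex^'k))"

definition is_haar_on_Omega :: "real^'k \<Rightarrow> real^'k \<Rightarrow> (complex^'k) measure \<Rightarrow> bool" where
  "is_haar_on_Omega \<omega> \<phi> \<pi> \<longleftrightarrow>
     prob_space \<pi> \<and> space \<pi> = clock_Omega \<omega> \<phi> \<and>
     sets \<pi> = sets (restrict_space borel (clock_Omega \<omega> \<phi>)) \<and>
     (\<forall>h\<in>clock_group \<omega>. \<forall>A\<in>sets \<pi>.
        emeasure \<pi> ((\<lambda>z. (\<chi> i. h$i * z$i)) -` A \<inter> space \<pi>) = emeasure \<pi> A)"

text \<open>G(z) = G0((z + 1/z)/2), taken componentwise (real part; it is real on Omega).\<close>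
definition probe_G :: "(real^'k \<Rightarrow> real^'m) \<Rightarrow> complex^'k \<Rightarrow> real^'m" where
  "probe_G G0 z = G0 (\<chi> i. Re ((z$i + inverse (z$i)) / 2))"

end

theory Submission
  imports Defs
begin

(* The clock flow multiplies a character z^n of the torus by exp(2 pi i <n, omega> t). If
   <n, omega> = 0 the character is constant on the orbit closure Omega; otherwise the flow-invariant
   measure pi gives it integral zero, and its time average over [0, R] is O(1/R). Real trigonometric
   polynomials are dense in C(Omega) by Stone-Weierstrass, so the time averages of every continuous
   function converge to its pi-average, uniformly in the initial point. In the parameter theta the
   family f(theta, .) / (1 + |theta|) is uniformly Lipschitz, so a partition of unity on the compact
   set G(Omega) reduces it to finitely many continuous functions with coefficients bounded in theta;
   epsilon_f(R) is the supremum of the normalised error at horizon R, and the substitution t = alpha s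
   turns the average of xi^alpha over [0, T] into an average over [0, T / alpha]. *)

section \<open>The torus and the clock flow\<close>

definition torus :: "(complex^'k) set" where
  "torus = {z. \<forall>i. norm (z$i) = 1}"

lemma compact_torus: "compact (torus :: (complex^'k) set)"
  unfolding compact_eq_bounded_closed
proof
  have "norm z = sqrt (real CARD('k))" if "z \<in> torus" for z :: "complex^'k"
    using that unfolding torus_def norm_vec_def L2_set_def by simp
  then show "bounded (torus :: (complex^'k) set)"
    unfolding bounded_iff by (metis order_refl)
  show "closed (torus :: (complex^'k) set)"
    unfolding torus_def by (intro closed_Collect_all closed_Collect_eq continuous_intros)
qed

lemma torus_nonzero:
  assumes "z \<in> torus" shows "z$i \<noteq> 0"
proof
  assume "z$i = 0"
  moreover have "norm (z$i) = 1" using assms unfolding torus_def by simp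
  ultimately show False by simp
qed

lemma torus_cnj:
  assumes "z \<in> torus" shows "cnj (z$i) = inverse (z$i)"
proof -
  have "z$i * cnj (z$i) = 1"
    using assms complex_norm_square[of "z$i"] unfolding torus_def by simp
  then show ?thesis by (metis inverse_unique)
qed

lemma clock_in_torus: "clock \<omega> \<phi> t \<in> torus"
  unfolding torus_def clock_def by simp

lemma clock_eq_clock_flow: "clock \<omega> \<phi> t = clock_flow \<omega> t (clock \<omega> \<phi> 0)"
  unfolding clock_flow_def clock_def by (simp add: vec_eq_iff cis_mult algebra_simps)

lemma continuous_on_clock_flow: "continuous_on A (clock_flow \<omega> t)"
  unfolding clock_flow_def by (intro continuous_on_vec_lambda continuous_intros)

lemma continuous_on_clock_flow_time: "continuous_on A (\<lambda>t. clock_flow \<omega> t z)"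
  unfolding clock_flow_def by (intro continuous_on_vec_lambda continuous_intros)

lemma clock_Omega_subset_torus: "clock_Omega \<omega> \<phi> \<subseteq> torus"
  unfolding clock_Omega_def
  by (rule closure_minimal) (auto intro: clock_in_torus compact_imp_closed compact_torus)

lemma compact_clock_Omega: "compact (clock_Omega \<omega> \<phi>)"
proof -
  have "compact (torus \<inter> clock_Omega \<omega> \<phi>)"
    unfolding clock_Omega_def by (intro compact_Int_closed compact_torus closed_closure)
  then show ?thesis
    by (simp add: Int_absorb1 clock_Omega_subset_torus)
qed

lemma clock_in_clock_Omega: "clock \<omega> \<phi> t \<in> clock_Omega \<omega> \<phi>"
  unfolding clock_Omega_def by (meson closure_subset rangeI subsetD)

lemma clock_flow_in_clock_Omega:
  assumes "z \<in> clock_Omega \<omega> \<phi>" shows "clock_flow \<omega> t z \<in> clock_Omega \<omega> \<phi>"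
proof -
  have "clock_flow \<omega> t (clock \<omega> \<phi> s) = clock \<omega> \<phi> (t + s)" for s
    unfolding clock_flow_def clock_def by (simp add: vec_eq_iff cis_mult algebra_simps)
  then have "clock_flow \<omega> t ` range (clock \<omega> \<phi>) \<subseteq> clock_Omega \<omega> \<phi>"
    by (auto intro: clock_in_clock_Omega)
  then have "clock_flow \<omega> t ` clock_Omega \<omega> \<phi> \<subseteq> clock_Omega \<omega> \<phi>"
    unfolding clock_Omega_def by (intro image_closure_subset continuous_on_clock_flow) auto
  then show ?thesis using assms by auto
qed

section \<open>Characters and trigonometric polynomials\<close>

definition character :: "('k \<Rightarrow> int) \<Rightarrow> complex^'k \<Rightarrow> complex" where
  "character n z = (\<Prod>i\<in>UNIV. z$i powi n i)"

lemma continuous_on_character: "continuous_on torus (character n)"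
  unfolding character_def by (intro continuous_intros) (use torus_nonzero in blast)

lemma norm_character: "z \<in> torus \<Longrightarrow> norm (character n z) = 1"
  unfolding character_def torus_def by (simp add: prod_norm[symmetric] norm_power_int)

lemma prod_cis: "(\<Prod>i\<in>I. cis (f i)) = cis (\<Sum>i\<in>I. f i)"
  by (induction I rule: infinite_finite_induct) (auto simp: cis_mult)

lemma character_clock_flow:
  "character n (clock_flow \<omega> s z) = cis (2 * pi * (\<Sum>i\<in>UNIV. of_int (n i) * \<omega>$i) * s) * character n z"
proof -
  have "character n (clock_flow \<omega> s z) = (\<Prod>i\<in>UNIV. cis (2 * pi * (of_int (n i) * \<omega>$i) * s) * z$i powi n i)"
    unfolding character_def clock_flow_def by (simp add: power_int_mult_distrib cis_power_int mult_ac)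
  also have "\<dots> = cis (\<Sum>i\<in>UNIV. 2 * pi * (of_int (n i) * \<omega>$i) * s) * character n z"
    unfolding prod.distrib prod_cis character_def ..
  finally show ?thesis
    by (simp add: sum_distrib_left sum_distrib_right)
qed

lemma character_add:
  "z \<in> torus \<Longrightarrow> character (\<lambda>i. n i + m i) z = character n z * character m z"
  unfolding character_def by (simp add: power_int_add torus_nonzero prod.distrib)

lemma cnj_character: "z \<in> torus \<Longrightarrow> cnj (character n z) = character (\<lambda>i. - n i) z"
  unfolding character_def by (simp add: torus_cnj power_int_inverse power_int_minus)

lemma character_zero: "character (\<lambda>i. 0) z = 1"
  unfolding character_def by simp

lemma character_axis: "character (\<lambda>j. if j = i then 1 else 0) z = z$i"
proof -
  have "character (\<lambda>j. if j = i then 1 else 0) z = (\<Prod>j\<in>UNIV. if j = i then z$i else 1)"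
    unfolding character_def by (intro prod.cong) auto
  then show ?thesis by simp
qed

lemma norm_integral_Re_cis_le:
  assumes "\<beta> \<noteq> 0" "0 \<le> R"
  shows "norm (integral {0..R} (\<lambda>s. Re (K * cis (\<beta> * s)))) \<le> 2 * norm K / \<bar>\<beta>\<bar>"
proof -
  define \<Phi> where "\<Phi> s = Im (K * cis (\<beta> * s)) / \<beta>" for s
  have "(\<Phi> has_real_derivative Re (K * cis (\<beta> * s))) (at s within {0..R})" for s
    unfolding \<Phi>_def using assms(1) by (auto intro!: derivative_eq_intros simp: field_simps)
  then have "((\<lambda>s. Re (K * cis (\<beta> * s))) has_integral \<Phi> R - \<Phi> 0) {0..R}"
    using assms(2) by (intro fundamental_theorem_of_calculus) (auto simp: has_real_derivative_iff_has_vector_derivative)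
  then have "norm (integral {0..R} (\<lambda>s. Re (K * cis (\<beta> * s)))) = \<bar>Im (K * cis (\<beta> * R)) - Im K\<bar> / \<bar>\<beta>\<bar>"
    by (simp add: integral_unique \<Phi>_def diff_divide_distrib[symmetric] abs_divide)
  also have "\<dots> \<le> 2 * norm K / \<bar>\<beta>\<bar>"
    using abs_Im_le_cmod[of "K * cis (\<beta> * R)"] abs_Im_le_cmod[of K]
    by (intro divide_right_mono) (auto simp: norm_mult)
  finally show ?thesis .
qed

definition trig_poly :: "(complex^'k \<Rightarrow> real) \<Rightarrow> bool" where
  "trig_poly g \<longleftrightarrow> (\<exists>cs. \<forall>z\<in>torus. g z = (\<Sum>(c, n)\<leftarrow>cs. Re (c * character n z)))"

lemma trig_poly_cong:
  assumes "trig_poly g" "\<And>z. z \<in> torus \<Longrightarrow> g z = h z" shows "trig_poly h"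
  using assms unfolding trig_poly_def by auto

lemma trig_poly_character: "trig_poly (\<lambda>z. Re (c * character n z))"
  unfolding trig_poly_def by (intro exI[of _ "[(c, n)]"]) simp

lemma trig_poly_zero: "trig_poly (\<lambda>z. 0)"
  unfolding trig_poly_def by (intro exI[of _ "[]"]) simp

lemma trig_poly_const: "trig_poly (\<lambda>z. c)"
  using trig_poly_character[of "of_real c" "\<lambda>i. 0"] by (simp add: character_zero)

lemma trig_poly_add:
  assumes "trig_poly f" "trig_poly g" shows "trig_poly (\<lambda>z. f z + g z)"
proof -
  obtain cs ds where "\<forall>z\<in>torus. f z = (\<Sum>(c, n)\<leftarrow>cs. Re (c * character n z))"
    "\<forall>z\<in>torus. g z = (\<Sum>(c, n)\<leftarrow>ds. Re (c * character n z))"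
    using assms unfolding trig_poly_def by blast
  then show ?thesis unfolding trig_poly_def by (intro exI[of _ "cs @ ds"]) simp
qed

lemma trig_poly_sum: "finite S \<Longrightarrow> (\<And>b. b \<in> S \<Longrightarrow> trig_poly (g b)) \<Longrightarrow> trig_poly (\<lambda>z. \<Sum>b\<in>S. g b z)"
  by (induction S rule: finite_induct) (auto intro: trig_poly_zero trig_poly_add)

lemma Re_character_mult_Re_character:
  assumes "z \<in> torus"
  shows "Re (c * character n z) * Re (d * character m z)
       = Re (c * d / 2 * character (\<lambda>i. n i + m i) z) + Re (c * cnj d / 2 * character (\<lambda>i. n i - m i) z)"
proof -
  have Re_mult_Re: "Re a * Re b = Re (a * b / 2) + Re (a * cnj b / 2)" for a b :: complex
    by (simp add: field_simps)
  have sum: "c * character n z * (d * character m z) / 2 = c * d / 2 * character (\<lambda>i. n i + m i) z"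
    using assms by (simp add: character_add)
  have "character (\<lambda>i. n i - m i) z = character n z * cnj (character m z)"
    using character_add[OF assms, of n "\<lambda>i. - m i"] by (simp add: cnj_character[OF assms])
  then have diff: "c * character n z * cnj (d * character m z) / 2 = c * cnj d / 2 * character (\<lambda>i. n i - m i) z"
    by simp
  show ?thesis
    using Re_mult_Re[of "c * character n z" "d * character m z"] unfolding sum diff .
qed

lemma trig_poly_mult_character:
  assumes "trig_poly g" shows "trig_poly (\<lambda>z. Re (c * character n z) * g z)"
proof -
  obtain ds where g: "\<forall>z\<in>torus. g z = (\<Sum>(d, m)\<leftarrow>ds. Re (d * character m z))"
    using assms unfolding trig_poly_def by blast
  have "trig_poly (\<lambda>z. Re (c * character n z) * (\<Sum>(d, m)\<leftarrow>ds. Re (d * character m z)))"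
  proof (induction ds)
    case Nil
    then show ?case by (simp add: trig_poly_zero)
  next
    case (Cons dm ds)
    obtain d m where dm: "dm = (d, m)" by force
    have "trig_poly (\<lambda>z. Re (c * character n z) * Re (d * character m z))"
      by (rule trig_poly_cong[OF trig_poly_add[OF trig_poly_character[of "c * d / 2" "\<lambda>i. n i + m i"]
                                                  trig_poly_character[of "c * cnj d / 2" "\<lambda>i. n i - m i"]]])
         (simp only: Re_character_mult_Re_character)
    then have "trig_poly (\<lambda>z. Re (c * character n z) * Re (d * character m z)
                  + Re (c * character n z) * (\<Sum>(d, m)\<leftarrow>ds. Re (d * character m z)))"
      using Cons.IH by (rule trig_poly_add)
    moreover have "(\<lambda>z. Re (c * character n z) * (\<Sum>(d, m)\<leftarrow>dm # ds. Re (d * character m z)))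
      = (\<lambda>z. Re (c * character n z) * Re (d * character m z)
                  + Re (c * character n z) * (\<Sum>(d, m)\<leftarrow>ds. Re (d * character m z)))"
      by (simp add: dm distrib_left)
    ultimately show ?case by simp
  qed
  then show ?thesis by (rule trig_poly_cong) (simp add: g)
qed

lemma trig_poly_mult: "trig_poly f \<Longrightarrow> trig_poly g \<Longrightarrow> trig_poly (\<lambda>z. f z * g z)"
proof -
  assume "trig_poly f" "trig_poly g"
  then obtain cs where f: "\<forall>z\<in>torus. f z = (\<Sum>(c, n)\<leftarrow>cs. Re (c * character n z))"
    unfolding trig_poly_def by blast
  have "trig_poly (\<lambda>z. (\<Sum>(c, n)\<leftarrow>cs. Re (c * character n z)) * g z)"
  proof (induction cs)
    case Nil
    then show ?case by (simp add: trig_poly_zero)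
  next
    case (Cons cn cs)
    obtain c n where cn: "cn = (c, n)" by force
    have "trig_poly (\<lambda>z. Re (c * character n z) * g z + (\<Sum>(c, n)\<leftarrow>cs. Re (c * character n z)) * g z)"
      by (intro trig_poly_add trig_poly_mult_character Cons.IH \<open>trig_poly g\<close>)
    moreover have "(\<lambda>z. (\<Sum>(c, n)\<leftarrow>cn # cs. Re (c * character n z)) * g z)
      = (\<lambda>z. Re (c * character n z) * g z + (\<Sum>(c, n)\<leftarrow>cs. Re (c * character n z)) * g z)"
      by (simp add: cn distrib_right)
    ultimately show ?case by simp
  qed
  then show ?thesis by (rule trig_poly_cong) (simp add: f)
qed

lemma real_polynomial_function_trig_poly:
  "real_polynomial_function p \<Longrightarrow> trig_poly (p :: complex^'k \<Rightarrow> real)"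
proof (induction rule: real_polynomial_function.induct)
  case (linear f)
  have "trig_poly (\<lambda>z. inner z b * f b)" if "b \<in> (Basis :: (complex^'k) set)" for b
  proof -
    from that obtain i u where b: "b = axis i u" unfolding Basis_vec_def by blast
    show ?thesis
      by (rule trig_poly_cong[OF trig_poly_character[of "of_real (f b) * cnj u" "\<lambda>j. if j = i then 1 else 0"]])
         (simp add: b inner_axis character_axis inner_complex_def algebra_simps)
  qed
  then have "trig_poly (\<lambda>z. \<Sum>b\<in>Basis. inner z b * f b)"
    by (intro trig_poly_sum) auto
  moreover have "(\<Sum>b\<in>Basis. inner z b * f b) = f z" for z
  proof -
    have "f z = f (\<Sum>b\<in>Basis. inner z b *\<^sub>R b)" by (simp add: euclidean_representation)
    also have "\<dots> = (\<Sum>b\<in>Basis. inner z b * f b)"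
      using bounded_linear.linear[OF linear.hyps] by (simp add: linear_sum linear_scale)
    finally show ?thesis ..
  qed
  ultimately show ?case by simp
qed (auto intro: trig_poly_const trig_poly_add trig_poly_mult)

lemma compact_partition_of_unity:
  fixes K :: "'a::metric_space set"
  assumes "compact K" "0 < \<delta>"
  obtains P :: "'a set" and \<psi> :: "'a \<Rightarrow> 'a \<Rightarrow> real"
  where "finite P" "P \<subseteq> K" "\<And>p. continuous_on K (\<psi> p)" "\<And>p x. x \<in> K \<Longrightarrow> 0 \<le> \<psi> p x"
    "\<And>x. x \<in> K \<Longrightarrow> (\<Sum>p\<in>P. \<psi> p x) = 1" "\<And>p x. x \<in> K \<Longrightarrow> \<psi> p x \<noteq> 0 \<Longrightarrow> dist x p < \<delta>"
proof -
  obtain P where P: "P \<subseteq> K" "finite P" "K \<subseteq> (\<Union>p\<in>P. ball p \<delta>)"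
    using compactE_image[OF assms(1), of K "\<lambda>p. ball p \<delta>"] assms(2) by force
  define w where "w p x = max 0 (\<delta> - dist x p)" for p x :: 'a
  define W where "W x = (\<Sum>q\<in>P. w q x)" for x :: 'a
  have W_pos: "0 < W x" if x: "x \<in> K" for x
  proof -
    obtain q where "q \<in> P" "dist q x < \<delta>"
      using P(3) x by auto
    then have "0 < w q x"
      unfolding w_def by (simp add: dist_commute)
    then show ?thesis
      unfolding W_def using \<open>q \<in> P\<close> P(2) by (intro sum_pos2) (auto simp: w_def)
  qed
  show thesis
  proof (rule that[of P "\<lambda>p x. w p x / W x"])
    show "continuous_on K (\<lambda>x. w p x / W x)" for p
    proof (rule continuous_on_divide)
      show "continuous_on K (w p)" "continuous_on K W"
        unfolding W_def w_def by (intro continuous_intros)+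
      show "\<forall>x\<in>K. W x \<noteq> 0"
        using W_pos by force
    qed
    show "(\<Sum>p\<in>P. w p x / W x) = 1" if "x \<in> K" for x
      using W_pos[OF that] by (simp add: sum_divide_distrib[symmetric] W_def)
    show "dist x p < \<delta>" if "w p x / W x \<noteq> 0" for p x
      using that by (auto simp: w_def max_def split: if_splits)
    show "0 \<le> w p x / W x" if "x \<in> K" for p x
      using W_pos[OF that] by (simp add: w_def)
  qed (use P in auto)
qed

lemma norm_minus_convex_combination_le:
  fixes y :: "'b::real_normed_vector"
  assumes "finite P" "\<And>p. p \<in> P \<Longrightarrow> 0 \<le> w p" "sum w P = 1"
    and "\<And>p. p \<in> P \<Longrightarrow> w p \<noteq> 0 \<Longrightarrow> norm (y - v p) \<le> e"
  shows "norm (y - (\<Sum>p\<in>P. w p *\<^sub>R v p)) \<le> e"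
proof -
  have "y - (\<Sum>p\<in>P. w p *\<^sub>R v p) = (\<Sum>p\<in>P. w p *\<^sub>R (y - v p))"
    using assms(3) by (simp add: scaleR_diff_right sum_subtractf scaleR_sum_left[symmetric])
  also have "norm \<dots> \<le> (\<Sum>p\<in>P. w p * e)"
  proof (intro order_trans[OF norm_sum sum_mono])
    fix p assume "p \<in> P"
    show "norm (w p *\<^sub>R (y - v p)) \<le> w p * e"
    proof (cases "w p = 0")
      case False
      then show ?thesis
        using assms(2,4) \<open>p \<in> P\<close> by (simp add: mult_left_mono)
    qed simp
  qed
  also have "\<dots> = e"
    using assms(3) by (simp add: sum_distrib_right[symmetric])
  finally show ?thesis .
qed

lemma lipschitz_partition_of_unity_approx:
  fixes g :: "'b::metric_space \<Rightarrow> 'a::real_normed_vector"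
  assumes "L-lipschitz_on K g" "finite P" "P \<subseteq> K" "x \<in> K"
    and "\<And>p. 0 \<le> \<psi> p x" "(\<Sum>p\<in>P. \<psi> p x) = 1" "\<And>p. \<psi> p x \<noteq> 0 \<Longrightarrow> dist x p < \<delta>"
  shows "norm (g x - (\<Sum>p\<in>P. \<psi> p x *\<^sub>R g p)) \<le> L * \<delta>"
proof (rule norm_minus_convex_combination_le[OF assms(2,5,6)])
  fix p assume "p \<in> P" "\<psi> p x \<noteq> 0"
  then have "norm (g x - g p) \<le> L * dist x p"
    using lipschitz_onD[OF assms(1) \<open>x \<in> K\<close>] assms(3) by (auto simp: dist_norm)
  also have "\<dots> \<le> L * \<delta>"
    using assms(7)[OF \<open>\<psi> p x \<noteq> 0\<close>] lipschitz_on_nonneg[OF assms(1)] by (intro mult_left_mono) auto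
  finally show "norm (g x - g p) \<le> L * \<delta>" .
qed

lemma bounded_lipschitz_family:
  fixes u :: "'q \<Rightarrow> 'b::metric_space \<Rightarrow> 'a::real_normed_vector"
  assumes "compact K" "\<And>\<theta>. L-lipschitz_on K (u \<theta>)" "\<And>x. x \<in> K \<Longrightarrow> bounded (range (\<lambda>\<theta>. u \<theta> x))"
  obtains B where "\<And>\<theta> x. x \<in> K \<Longrightarrow> norm (u \<theta> x) \<le> B"
proof -
  obtain P where P: "P \<subseteq> K" "finite P" "K \<subseteq> (\<Union>p\<in>P. ball p 1)"
    using compactE_image[OF assms(1), of K "\<lambda>p. ball p 1"] by force
  have "bounded (\<Union>p\<in>P. range (\<lambda>\<theta>. u \<theta> p))"
    using P assms(3) by (intro bounded_UN) auto
  then obtain B where B: "\<And>\<theta> p. p \<in> P \<Longrightarrow> norm (u \<theta> p) \<le> B"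
    unfolding bounded_iff by blast
  show thesis
  proof (rule that)
    fix \<theta> x assume "x \<in> K"
    then obtain p where p: "p \<in> P" "dist x p < 1"
      using P(3) by (auto simp: dist_commute)
    have "norm (u \<theta> x) \<le> norm (u \<theta> p) + dist (u \<theta> x) (u \<theta> p)"
      by (simp add: dist_norm norm_triangle_sub)
    also have "\<dots> \<le> B + L * dist x p"
      using B[OF p(1)] lipschitz_onD[OF assms(2) \<open>x \<in> K\<close>] p(1) P(1) by (intro add_mono) auto
    also have "\<dots> \<le> B + L"
      using p(2) lipschitz_on_nonneg[OF assms(2)] by (simp add: mult_left_le)
    finally show "norm (u \<theta> x) \<le> B + L" .
  qed
qed

lemma continuous_on_power_series_cube:
  fixes c :: "('k::finite \<Rightarrow> nat) \<Rightarrow> 'a::banach"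
  assumes summable: "(\<lambda>a. norm (c a)) summable_on UNIV"
    and series: "\<forall>x::real^'k. (\<forall>i. \<bar>x$i\<bar> \<le> 1) \<longrightarrow>
                   ((\<lambda>a. (\<Prod>i\<in>UNIV. (x$i) ^ (a i)) *\<^sub>R c a) has_sum G0 x) UNIV"
  shows "continuous_on {x. \<forall>i. \<bar>x$i\<bar> \<le> 1} G0"
proof (rule uniform_limit_theorem)
  have "norm ((\<Prod>i\<in>UNIV. (x$i) ^ (a i)) *\<^sub>R c a) \<le> norm (c a)" if "\<forall>i. \<bar>x$i\<bar> \<le> 1" for x a
  proof -
    have "\<bar>\<Prod>i\<in>UNIV. (x$i) ^ (a i)\<bar> \<le> 1"
      using that by (auto simp: abs_prod power_abs intro!: prod_le_1 power_le_one)
    then show ?thesis by (simp add: mult_left_le_one_le)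
  qed
  then show "uniform_limit {x. \<forall>i. \<bar>x$i\<bar> \<le> 1} (\<lambda>A x. \<Sum>a\<in>A. (\<Prod>i\<in>UNIV. (x$i) ^ (a i)) *\<^sub>R c a) G0
      (finite_subsets_at_top UNIV)"
    using series summable by (intro Weierstrass_m_test_general') auto
  show "\<forall>\<^sub>F A in finite_subsets_at_top UNIV.
      continuous_on {x. \<forall>i. \<bar>x$i\<bar> \<le> 1} (\<lambda>x. \<Sum>a\<in>A. (\<Prod>i\<in>UNIV. (x$i) ^ (a i)) *\<^sub>R c a)"
    by (intro always_eventually allI continuous_intros)
qed simp

lemma probe_G_torus: "z \<in> torus \<Longrightarrow> probe_G G0 z = G0 (\<chi> i. Re (z$i))"
proof -
  assume "z \<in> torus"
  then have "Re ((z$i + inverse (z$i)) / 2) = Re (z$i)" for i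
    using torus_cnj[of z i, symmetric] by (simp add: complex_add_cnj)
  then show ?thesis
    unfolding probe_G_def by simp
qed

lemma continuous_on_probe_G:
  assumes "continuous_on {x. \<forall>i. \<bar>x$i\<bar> \<le> 1} G0"
  shows "continuous_on torus (probe_G G0)"
proof -
  have "\<bar>Re (z$i)\<bar> \<le> 1" if "z \<in> torus" for z i
    using abs_Re_le_cmod[of "z$i"] that unfolding torus_def by simp
  then have "(\<lambda>z. \<chi> i. Re (z$i)) ` torus \<subseteq> {x. \<forall>i. \<bar>x$i\<bar> \<le> 1}"
    by auto
  moreover have "continuous_on torus (\<lambda>z::complex^'k. \<chi> i. Re (z$i))"
    by (intro continuous_on_vec_lambda continuous_intros)
  ultimately have "continuous_on torus (\<lambda>z. G0 (\<chi> i. Re (z$i)))"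
    using continuous_on_compose2[OF assms] by blast
  moreover have "continuous_on torus (probe_G G0) \<longleftrightarrow> continuous_on torus (\<lambda>z. G0 (\<chi> i. Re (z$i)))"
    by (rule continuous_on_cong[OF refl]) (rule probe_G_torus)
  ultimately show ?thesis
    by blast
qed

lemma lipschitz_on_joint_bound:
  assumes "\<forall>\<theta> \<theta>' \<xi> \<xi>'. norm (f \<theta>' \<xi> - f \<theta> \<xi>) + norm (f \<theta> \<xi>' - f \<theta> \<xi>)
                    \<le> L * (norm (\<theta>' - \<theta>) + norm (\<xi>' - \<xi>))"
  shows "\<bar>L\<bar>-lipschitz_on A (f \<theta>)"
proof (rule lipschitz_onI)
  fix \<xi> \<xi>'
  have "norm (f \<theta> \<xi> - f \<theta> \<xi>') \<le> L * norm (\<xi> - \<xi>')"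
    using assms[rule_format, of \<theta> \<xi>' \<theta> \<xi>] by simp
  also have "\<dots> \<le> \<bar>L\<bar> * norm (\<xi> - \<xi>')"
    by (intro mult_right_mono) auto
  finally show "dist (f \<theta> \<xi>) (f \<theta> \<xi>') \<le> \<bar>L\<bar> * dist \<xi> \<xi>'"
    by (simp add: dist_norm)
qed simp

lemma norm_le_linear_growth_joint_bound:
  assumes "\<forall>\<theta> \<theta>' \<xi> \<xi>'. norm (f \<theta>' \<xi> - f \<theta> \<xi>) + norm (f \<theta> \<xi>' - f \<theta> \<xi>)
                    \<le> L * (norm (\<theta>' - \<theta>) + norm (\<xi>' - \<xi>))"
  shows "norm (f \<theta> \<xi>) \<le> (norm (f 0 \<xi>) + \<bar>L\<bar>) * (1 + norm \<theta>)"
proof -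
  have "norm (f \<theta> \<xi> - f 0 \<xi>) \<le> L * norm \<theta>"
    using assms[rule_format, of \<theta> \<xi> 0 \<xi>] by simp
  also have "\<dots> \<le> \<bar>L\<bar> * norm \<theta>"
    by (intro mult_right_mono) auto
  finally have "norm (f \<theta> \<xi>) \<le> norm (f 0 \<xi>) + \<bar>L\<bar> * norm \<theta>"
    using norm_triangle_sub[of "f \<theta> \<xi>" "f 0 \<xi>"] by linarith
  also have "\<dots> \<le> (norm (f 0 \<xi>) + \<bar>L\<bar>) * (1 + norm \<theta>)"
    by (simp add: algebra_simps)
  finally show ?thesis .
qed

section \<open>Time averages along the clock flow\<close>

locale haar_clock =
  fixes \<omega> \<phi> :: "real^'k" and \<pi> :: "(complex^'k) measure"
  assumes haar: "is_haar_on_Omega \<omega> \<phi> \<pi>"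
begin

abbreviation \<Omega> :: "(complex^'k) set" where "\<Omega> \<equiv> clock_Omega \<omega> \<phi>"

lemma prob_space_pi: "prob_space \<pi>"
  using haar unfolding is_haar_on_Omega_def by blast

lemma space_pi: "space \<pi> = \<Omega>"
  using haar unfolding is_haar_on_Omega_def by blast

lemma sets_pi: "sets \<pi> = sets (restrict_space borel \<Omega>)"
  using haar unfolding is_haar_on_Omega_def by blast

lemma borel_measurable_continuous_on_Omega: "continuous_on \<Omega> F \<Longrightarrow> F \<in> borel_measurable \<pi>"
  using measurable_cong_sets[OF sets_pi refl] borel_measurable_continuous_on_restrict by blast

lemma norm_integral_le:
  fixes F :: "complex^'k \<Rightarrow> 'a::{banach,second_countable_topology}"
  assumes "continuous_on \<Omega> F" "\<And>z. z \<in> \<Omega> \<Longrightarrow> norm (F z) \<le> B"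
  shows "integrable \<pi> F" "norm (\<integral>z. F z \<partial>\<pi>) \<le> B"
proof -
  interpret prob_space \<pi> by (rule prob_space_pi)
  have ae: "AE z in \<pi>. norm (F z) \<le> B"
    using assms(2) by (intro AE_I2) (simp add: space_pi)
  show int: "integrable \<pi> F"
    using ae borel_measurable_continuous_on_Omega[OF assms(1)] by (rule integrable_const_bound)
  have "norm (\<integral>z. F z \<partial>\<pi>) \<le> (\<integral>z. norm (F z) \<partial>\<pi>)"
    by (rule integral_norm_bound)
  also have "\<dots> \<le> B"
    using int ae by (intro integral_le_const) auto
  finally show "norm (\<integral>z. F z \<partial>\<pi>) \<le> B" .
qed

lemma integrable_continuous_on_Omega:
  fixes F :: "complex^'k \<Rightarrow> 'a::{banach,second_countable_topology}"
  assumes "continuous_on \<Omega> F" shows "integrable \<pi> F"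
proof -
  obtain B where "\<And>z. z \<in> \<Omega> \<Longrightarrow> norm (F z) \<le> B"
    using compact_imp_bounded[OF compact_continuous_image[OF assms compact_clock_Omega]]
    unfolding bounded_iff by blast
  then show ?thesis using norm_integral_le(1)[OF assms] by blast
qed

lemma clock_flow_measurable: "clock_flow \<omega> t \<in> \<pi> \<rightarrow>\<^sub>M \<pi>"
proof -
  have "clock_flow \<omega> t \<in> restrict_space borel \<Omega> \<rightarrow>\<^sub>M restrict_space borel \<Omega>"
    by (intro measurable_restrict_space3 borel_measurable_continuous_onI continuous_on_clock_flow)
       (auto intro: clock_flow_in_clock_Omega)
  then show ?thesis using measurable_cong_sets[OF sets_pi sets_pi] by blast
qed

lemma distr_clock_flow: "distr \<pi> \<pi> (clock_flow \<omega> t) = \<pi>"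
proof (rule measure_eqI)
  fix A assume "A \<in> sets (distr \<pi> \<pi> (clock_flow \<omega> t))"
  then have A: "A \<in> sets \<pi>" by simp
  have "(\<chi> i. cis (2 * pi * \<omega>$i * t)) \<in> clock_group \<omega>"
    unfolding clock_group_def by (meson closure_subset rangeI subsetD)
  then have "emeasure \<pi> ((\<lambda>z. \<chi> i. (\<chi> i. cis (2 * pi * \<omega>$i * t))$i * z$i) -` A \<inter> space \<pi>) = emeasure \<pi> A"
    using haar A unfolding is_haar_on_Omega_def by blast
  then show "emeasure (distr \<pi> \<pi> (clock_flow \<omega> t)) A = emeasure \<pi> A"
    using emeasure_distr[OF clock_flow_measurable A] by (simp add: clock_flow_def[abs_def])
qed simp

lemma integral_clock_flow:
  fixes F :: "complex^'k \<Rightarrow> 'a::{banach,second_countable_topology}"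
  assumes "F \<in> borel_measurable \<pi>"
  shows "(\<integral>z. F (clock_flow \<omega> t z) \<partial>\<pi>) = (\<integral>z. F z \<partial>\<pi>)"
  using integral_distr[OF clock_flow_measurable assms] distr_clock_flow by simp

definition time_avg :: "(complex^'k \<Rightarrow> 'a::real_normed_vector) \<Rightarrow> real \<Rightarrow> complex^'k \<Rightarrow> 'a" where
  "time_avg F R z0 = (1 / R) *\<^sub>R integral {0..R} (\<lambda>s. F (clock_flow \<omega> s z0))"

lemma continuous_on_orbit:
  "continuous_on \<Omega> F \<Longrightarrow> z0 \<in> \<Omega> \<Longrightarrow> continuous_on A (\<lambda>s. F (clock_flow \<omega> s z0))"
  by (rule continuous_on_compose2[OF _ continuous_on_clock_flow_time]) (auto intro: clock_flow_in_clock_Omega)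

lemma integrable_orbit:
  fixes F :: "complex^'k \<Rightarrow> 'a::banach"
  shows "continuous_on \<Omega> F \<Longrightarrow> z0 \<in> \<Omega> \<Longrightarrow> (\<lambda>s. F (clock_flow \<omega> s z0)) integrable_on {a..b}"
  by (intro integrable_continuous_interval continuous_on_orbit)

lemma time_avg_cong:
  "z0 \<in> \<Omega> \<Longrightarrow> (\<And>z. z \<in> \<Omega> \<Longrightarrow> F z = G z) \<Longrightarrow> time_avg F R z0 = time_avg G R z0"
  unfolding time_avg_def by (simp add: clock_flow_in_clock_Omega cong: integral_cong)

lemma time_avg_add:
  fixes F G :: "complex^'k \<Rightarrow> 'a::banach"
  assumes "continuous_on \<Omega> F" "continuous_on \<Omega> G" "z0 \<in> \<Omega>"
  shows "time_avg (\<lambda>z. F z + G z) R z0 = time_avg F R z0 + time_avg G R z0"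
  unfolding time_avg_def
  by (simp add: integral_add integrable_orbit assms scaleR_add_right)

lemma time_avg_diff:
  fixes F G :: "complex^'k \<Rightarrow> 'a::banach"
  assumes "continuous_on \<Omega> F" "continuous_on \<Omega> G" "z0 \<in> \<Omega>"
  shows "time_avg (\<lambda>z. F z - G z) R z0 = time_avg F R z0 - time_avg G R z0"
  unfolding time_avg_def
  by (simp add: integral_diff integrable_orbit assms scaleR_diff_right)

lemma time_avg_scaleR_left:
  fixes \<psi> :: "complex^'k \<Rightarrow> real"
  assumes "continuous_on \<Omega> \<psi>" "z0 \<in> \<Omega>"
  shows "time_avg (\<lambda>z. \<psi> z *\<^sub>R v) R z0 = time_avg \<psi> R z0 *\<^sub>R v"
proof -
  have "((\<lambda>s. \<psi> (clock_flow \<omega> s z0) *\<^sub>R v) has_integral integral {0..R} (\<lambda>s. \<psi> (clock_flow \<omega> s z0)) *\<^sub>R v) {0..R}"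
    by (intro has_integral_scaleR_left integrable_integral integrable_orbit assms)
  then show ?thesis
    unfolding time_avg_def by (simp add: integral_unique)
qed

lemma time_avg_scaleR_right: "time_avg (\<lambda>z. c *\<^sub>R F z) R z0 = c *\<^sub>R time_avg F R z0"
  unfolding time_avg_def by simp

lemma norm_time_avg_le:
  fixes F :: "complex^'k \<Rightarrow> 'a::banach"
  assumes "continuous_on \<Omega> F" "z0 \<in> \<Omega>" "\<And>z. z \<in> \<Omega> \<Longrightarrow> norm (F z) \<le> B"
  shows "norm (time_avg F R z0) \<le> B"
proof (cases "0 < R")
  case True
  have "norm (integral {0..R} (\<lambda>s. F (clock_flow \<omega> s z0))) \<le> B * (R - 0)"
    using True assms by (intro integral_bound continuous_on_orbit) (auto intro: clock_flow_in_clock_Omega)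
  then show ?thesis
    using True unfolding time_avg_def by (simp add: field_simps)
next
  case False
  then have "integral {0..R} (\<lambda>s. F (clock_flow \<omega> s z0)) = 0"
    by (cases "R = 0") auto
  moreover have "0 \<le> B"
    using assms(2,3) norm_ge_zero order_trans by blast
  ultimately show ?thesis
    unfolding time_avg_def by simp
qed

lemma time_avg_rescale:
  fixes F :: "complex^'k \<Rightarrow> 'a::banach"
  assumes "continuous_on \<Omega> F" "z0 \<in> \<Omega>" "0 < T" "0 < \<alpha>"
  shows "(1 / T) *\<^sub>R integral {0..T} (\<lambda>t. F (clock_flow \<omega> (t / \<alpha>) z0) - c) = time_avg F (T / \<alpha>) z0 - c"
proof -
  have "(\<lambda>x. x / (1 / \<alpha>)) = (*) \<alpha>"
    by (auto simp: fun_eq_iff)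
  then have img: "(\<lambda>x. x / (1 / \<alpha>)) ` {0..T / \<alpha>} = {0..T}"
    using assms by (simp only: image_mult_atLeastAtMost) simp
  have stretch: "integral {0..T} (\<lambda>t. F (clock_flow \<omega> (1 / \<alpha> * t) z0))
      = \<alpha> *\<^sub>R integral {0..T / \<alpha>} (\<lambda>s. F (clock_flow \<omega> s z0))"
    using integral_stretch_real[of "1 / \<alpha>" 0 "T / \<alpha>" "\<lambda>s. F (clock_flow \<omega> s z0)"] assms
    unfolding img by simp
  have "(\<lambda>t. F (clock_flow \<omega> (t / \<alpha>) z0)) integrable_on {0..T}"
    by (intro integrable_continuous_interval continuous_on_compose2[OF continuous_on_orbit[OF assms(1,2), of UNIV]]
        continuous_intros) (use assms(4) in auto)
  then have "integral {0..T} (\<lambda>t. F (clock_flow \<omega> (t / \<alpha>) z0) - c)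
      = \<alpha> *\<^sub>R integral {0..T / \<alpha>} (\<lambda>s. F (clock_flow \<omega> s z0)) - T *\<^sub>R c"
    using stretch assms(3) by (simp add: integral_diff integrable_const_ivl)
  then show ?thesis
    using assms(3,4) unfolding time_avg_def by (simp add: scaleR_diff_right)
qed

text \<open>Uniformity is in the parameter \<open>\<theta>\<close> and the initial point; a single observable is
  treated as a constant family.\<close>
definition uniformly_ergodic :: "('q \<Rightarrow> complex^'k \<Rightarrow> 'a::{banach,second_countable_topology}) \<Rightarrow> bool" where
  "uniformly_ergodic F \<longleftrightarrow> (\<forall>\<theta>. continuous_on \<Omega> (F \<theta>)) \<and>
     uniform_limit (UNIV \<times> \<Omega>) (\<lambda>R x. time_avg (F (fst x)) R (snd x)) (\<lambda>x. \<integral>z. F (fst x) z \<partial>\<pi>) at_top"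

lemma uniformly_ergodicI:
  fixes F :: "'q \<Rightarrow> complex^'k \<Rightarrow> 'a::{banach,second_countable_topology}"
  assumes "\<And>\<theta>. continuous_on \<Omega> (F \<theta>)"
    and "uniform_limit (UNIV \<times> \<Omega>) (\<lambda>R x. A R (fst x) (snd x)) (\<lambda>x. I (fst x)) at_top"
    and "\<And>R \<theta> z0. z0 \<in> \<Omega> \<Longrightarrow> time_avg (F \<theta>) R z0 = A R \<theta> z0"
    and "\<And>\<theta>. (\<integral>z. F \<theta> z \<partial>\<pi>) = I \<theta>"
  shows "uniformly_ergodic F"
proof -
  have "uniform_limit (UNIV \<times> \<Omega>) (\<lambda>R x. time_avg (F (fst x)) R (snd x)) (\<lambda>x. \<integral>z. F (fst x) z \<partial>\<pi>) at_top
    \<longleftrightarrow> uniform_limit (UNIV \<times> \<Omega>) (\<lambda>R x. A R (fst x) (snd x)) (\<lambda>x. I (fst x)) at_top"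
    using assms(3,4) by (intro uniform_limit_cong') auto
  then show ?thesis
    using assms(1,2) unfolding uniformly_ergodic_def by blast
qed

lemma uniformly_ergodicD:
  assumes "uniformly_ergodic F"
  shows "continuous_on \<Omega> (F \<theta>)"
    and "0 < e \<Longrightarrow> \<forall>\<^sub>F R in at_top. \<forall>\<theta>. \<forall>z0\<in>\<Omega>. dist (time_avg (F \<theta>) R z0) (\<integral>z. F \<theta> z \<partial>\<pi>) < e"
  using assms unfolding uniformly_ergodic_def
  by (auto dest!: uniform_limitD[where e=e] elim!: eventually_mono)

lemma uniformly_ergodic_cong:
  assumes "uniformly_ergodic F" "\<And>\<theta> z. z \<in> \<Omega> \<Longrightarrow> F \<theta> z = G \<theta> z"
  shows "uniformly_ergodic G"
proof (rule uniformly_ergodicI[where A="\<lambda>R \<theta> z0. time_avg (F \<theta>) R z0" and I="\<lambda>\<theta>. \<integral>z. F \<theta> z \<partial>\<pi>"])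
  show "continuous_on \<Omega> (G \<theta>)" for \<theta>
    using uniformly_ergodicD(1)[OF assms(1)] assms(2) continuous_on_cong by metis
  show "uniform_limit (UNIV \<times> \<Omega>) (\<lambda>R x. time_avg (F (fst x)) R (snd x)) (\<lambda>x. \<integral>z. F (fst x) z \<partial>\<pi>) at_top"
    using assms(1) unfolding uniformly_ergodic_def by blast
  show "time_avg (G \<theta>) R z0 = time_avg (F \<theta>) R z0" if "z0 \<in> \<Omega>" for \<theta> R z0
    using time_avg_cong[OF that, of "F \<theta>" "G \<theta>"] assms(2) by simp
  show "(\<integral>z. G \<theta> z \<partial>\<pi>) = (\<integral>z. F \<theta> z \<partial>\<pi>)" for \<theta>
    using assms(2) by (intro Bochner_Integration.integral_cong) (auto simp: space_pi)
qed

lemma uniformly_ergodic_zero: "uniformly_ergodic (\<lambda>\<theta> z. 0)"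
  unfolding uniformly_ergodic_def time_avg_def by (simp add: uniform_limit_const)

lemma uniformly_ergodic_add:
  assumes F: "uniformly_ergodic F" and G: "uniformly_ergodic G"
  shows "uniformly_ergodic (\<lambda>\<theta> z. F \<theta> z + G \<theta> z)"
proof (rule uniformly_ergodicI[where A="\<lambda>R \<theta> z0. time_avg (F \<theta>) R z0 + time_avg (G \<theta>) R z0"
                                and I="\<lambda>\<theta>. (\<integral>z. F \<theta> z \<partial>\<pi>) + (\<integral>z. G \<theta> z \<partial>\<pi>)"])
  note cont = uniformly_ergodicD(1)[OF F] uniformly_ergodicD(1)[OF G]
  show "continuous_on \<Omega> (\<lambda>z. F \<theta> z + G \<theta> z)" for \<theta>
    by (intro continuous_intros cont)
  show "uniform_limit (UNIV \<times> \<Omega>)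
      (\<lambda>R x. time_avg (F (fst x)) R (snd x) + time_avg (G (fst x)) R (snd x))
      (\<lambda>x. (\<integral>z. F (fst x) z \<partial>\<pi>) + (\<integral>z. G (fst x) z \<partial>\<pi>)) at_top"
    using F G unfolding uniformly_ergodic_def by (intro uniform_limit_add) auto
  show "time_avg (\<lambda>z. F \<theta> z + G \<theta> z) R z0 = time_avg (F \<theta>) R z0 + time_avg (G \<theta>) R z0"
    if "z0 \<in> \<Omega>" for \<theta> R z0
    using cont that by (rule time_avg_add)
  show "(\<integral>z. F \<theta> z + G \<theta> z \<partial>\<pi>) = (\<integral>z. F \<theta> z \<partial>\<pi>) + (\<integral>z. G \<theta> z \<partial>\<pi>)" for \<theta>
    by (intro Bochner_Integration.integral_add integrable_continuous_on_Omega cont)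
qed

lemma uniformly_ergodic_sum:
  "finite P \<Longrightarrow> (\<And>p. p \<in> P \<Longrightarrow> uniformly_ergodic (F p)) \<Longrightarrow> uniformly_ergodic (\<lambda>\<theta> z. \<Sum>p\<in>P. F p \<theta> z)"
proof (induction P rule: finite_induct)
  case empty
  then show ?case by (simp add: uniformly_ergodic_zero)
next
  case (insert p P)
  then show ?case by (simp add: uniformly_ergodic_add)
qed

lemma uniformly_ergodic_scaleR:
  fixes \<psi> :: "complex^'k \<Rightarrow> real" and v :: "'q \<Rightarrow> 'a::{banach,second_countable_topology}"
  assumes \<psi>: "uniformly_ergodic (\<lambda>_::'q. \<psi>)" and v: "bounded (range v)"
  shows "uniformly_ergodic (\<lambda>\<theta> z. \<psi> z *\<^sub>R v \<theta>)"
proof (rule uniformly_ergodicI[where A="\<lambda>R \<theta> z0. time_avg \<psi> R z0 *\<^sub>R v \<theta>"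
                                and I="\<lambda>\<theta>. (\<integral>z. \<psi> z \<partial>\<pi>) *\<^sub>R v \<theta>"])
  note cont = uniformly_ergodicD(1)[OF \<psi>]
  show "continuous_on \<Omega> (\<lambda>z. \<psi> z *\<^sub>R v \<theta>)" for \<theta>
    by (intro continuous_intros cont)
  have "bounded ((\<lambda>_. \<integral>z. \<psi> z \<partial>\<pi>) ` (UNIV \<times> \<Omega>))"
    by (rule bounded_subset[of "{\<integral>z. \<psi> z \<partial>\<pi>}"]) auto
  moreover have "bounded ((\<lambda>x. v (fst x)) ` (UNIV \<times> \<Omega>))"
    by (rule bounded_subset[OF v]) auto
  ultimately show "uniform_limit (UNIV \<times> \<Omega>) (\<lambda>R x. time_avg \<psi> R (snd x) *\<^sub>R v (fst x))
      (\<lambda>x. (\<integral>z. \<psi> z \<partial>\<pi>) *\<^sub>R v (fst x)) at_top"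
    using \<psi> unfolding uniformly_ergodic_def
    by (intro bounded_bilinear_bounded_uniform_limit_intros(3) uniform_limit_const) auto
  show "time_avg (\<lambda>z. \<psi> z *\<^sub>R v \<theta>) R z0 = time_avg \<psi> R z0 *\<^sub>R v \<theta>" if "z0 \<in> \<Omega>" for \<theta> R z0
    using cont that by (rule time_avg_scaleR_left)
  show "(\<integral>z. \<psi> z *\<^sub>R v \<theta> \<partial>\<pi>) = (\<integral>z. \<psi> z \<partial>\<pi>) *\<^sub>R v \<theta>" for \<theta>
    by (simp add: integrable_continuous_on_Omega[OF cont])
qed

lemma dist_time_avg_integral_le:
  fixes F G :: "complex^'k \<Rightarrow> 'a::{banach,second_countable_topology}"
  assumes "continuous_on \<Omega> F" "continuous_on \<Omega> G" "z0 \<in> \<Omega>" "\<And>z. z \<in> \<Omega> \<Longrightarrow> norm (F z - G z) \<le> e"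
  shows "dist (time_avg F R z0) (\<integral>z. F z \<partial>\<pi>) \<le> 2 * e + dist (time_avg G R z0) (\<integral>z. G z \<partial>\<pi>)"
proof -
  have cont: "continuous_on \<Omega> (\<lambda>z. F z - G z)"
    by (intro continuous_intros assms)
  have "time_avg F R z0 - (\<integral>z. F z \<partial>\<pi>)
      = time_avg (\<lambda>z. F z - G z) R z0 - (\<integral>z. F z - G z \<partial>\<pi>) + (time_avg G R z0 - (\<integral>z. G z \<partial>\<pi>))"
    using assms by (simp add: time_avg_diff integrable_continuous_on_Omega)
  then have "dist (time_avg F R z0) (\<integral>z. F z \<partial>\<pi>)
      \<le> norm (time_avg (\<lambda>z. F z - G z) R z0 - (\<integral>z. F z - G z \<partial>\<pi>)) + dist (time_avg G R z0) (\<integral>z. G z \<partial>\<pi>)"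
    by (simp add: dist_norm norm_triangle_ineq)
  also have "\<dots> \<le> norm (time_avg (\<lambda>z. F z - G z) R z0) + norm (\<integral>z. F z - G z \<partial>\<pi>)
      + dist (time_avg G R z0) (\<integral>z. G z \<partial>\<pi>)"
    using norm_triangle_ineq4 by simp
  also have "\<dots> \<le> e + e + dist (time_avg G R z0) (\<integral>z. G z \<partial>\<pi>)"
    using norm_time_avg_le[OF cont assms(3,4), of R] norm_integral_le(2)[OF cont assms(4)] by linarith
  finally show ?thesis by simp
qed

lemma uniformly_ergodic_approx:
  fixes F :: "'q \<Rightarrow> complex^'k \<Rightarrow> 'a::{banach,second_countable_topology}"
  assumes cont: "\<And>\<theta>. continuous_on \<Omega> (F \<theta>)"
    and approx: "\<And>e. 0 < e \<Longrightarrow> \<exists>G. uniformly_ergodic G \<and> (\<forall>\<theta>. \<forall>z\<in>\<Omega>. norm (F \<theta> z - G \<theta> z) \<le> e)"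
  shows "uniformly_ergodic F"
  unfolding uniformly_ergodic_def
proof (intro conjI allI cont uniform_limitI)
  fix e :: real assume "0 < e"
  then obtain G where G: "uniformly_ergodic G" and close: "\<And>\<theta> z. z \<in> \<Omega> \<Longrightarrow> norm (F \<theta> z - G \<theta> z) \<le> e / 4"
    using approx[of "e / 4"] by auto
  have "\<forall>\<^sub>F R in at_top. \<forall>\<theta>. \<forall>z0\<in>\<Omega>. dist (time_avg (G \<theta>) R z0) (\<integral>z. G \<theta> z \<partial>\<pi>) < e / 2"
    by (rule uniformly_ergodicD(2)[OF G]) (use \<open>0 < e\<close> in simp)
  then show "\<forall>\<^sub>F R in at_top. \<forall>x\<in>UNIV \<times> \<Omega>. dist (time_avg (F (fst x)) R (snd x)) (\<integral>z. F (fst x) z \<partial>\<pi>) < e"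
  proof (rule eventually_mono, safe)
    fix R and \<theta> :: 'q and z0
    assume near: "\<forall>\<theta>. \<forall>z0\<in>\<Omega>. dist (time_avg (G \<theta>) R z0) (\<integral>z. G \<theta> z \<partial>\<pi>) < e / 2" and "z0 \<in> \<Omega>"
    have "dist (time_avg (F \<theta>) R z0) (\<integral>z. F \<theta> z \<partial>\<pi>) \<le> 2 * (e / 4) + dist (time_avg (G \<theta>) R z0) (\<integral>z. G \<theta> z \<partial>\<pi>)"
      by (rule dist_time_avg_integral_le[OF cont uniformly_ergodicD(1)[OF G] \<open>z0 \<in> \<Omega>\<close> close[of _ \<theta>]])
    moreover have "dist (time_avg (G \<theta>) R z0) (\<integral>z. G \<theta> z \<partial>\<pi>) < e / 2"
      using near \<open>z0 \<in> \<Omega>\<close> by blast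
    ultimately show "dist (time_avg (F (fst (\<theta>, z0))) R (snd (\<theta>, z0))) (\<integral>z. F (fst (\<theta>, z0)) z \<partial>\<pi>) < e"
      by simp
  qed
qed

lemma uniformly_ergodic_constant:
  assumes "\<And>z. z \<in> \<Omega> \<Longrightarrow> F z = C"
  shows "uniformly_ergodic (\<lambda>_::'q. F)"
proof -
  have "uniformly_ergodic (\<lambda>_::'q. \<lambda>z. C)"
  proof (rule uniformly_ergodicI[where A="\<lambda>R \<theta> z0. if 0 < R then C else time_avg (\<lambda>z. C) R z0"
                                 and I="\<lambda>_. C"])
    show "uniform_limit (UNIV \<times> \<Omega>) (\<lambda>R x. if 0 < R then C else time_avg (\<lambda>z. C) R (snd x)) (\<lambda>x. C) at_top"
      by (intro uniform_limitI) (auto intro: eventually_mono[OF eventually_gt_at_top[of 0]])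
    show "time_avg (\<lambda>z. C) R z0 = (if 0 < R then C else time_avg (\<lambda>z. C) R z0)" for R z0
      unfolding time_avg_def by simp
    show "(\<integral>z. C \<partial>\<pi>) = C"
      using prob_space_pi by (simp add: prob_space.prob_space)
  qed simp
  then show ?thesis
    by (rule uniformly_ergodic_cong) (simp add: assms)
qed

lemma uniformly_ergodic_decay:
  fixes F :: "complex^'k \<Rightarrow> real"
  assumes "continuous_on \<Omega> F" "(\<integral>z. F z \<partial>\<pi>) = 0"
    and "\<And>R z0. 0 < R \<Longrightarrow> z0 \<in> \<Omega> \<Longrightarrow> \<bar>time_avg F R z0\<bar> \<le> B / R"
  shows "uniformly_ergodic (\<lambda>_::'q. F)"
proof (rule uniformly_ergodicI[where A="\<lambda>R \<theta>. time_avg F R" and I="\<lambda>_. 0"])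
  show "uniform_limit (UNIV \<times> \<Omega>) (\<lambda>R x. time_avg F R (snd x)) (\<lambda>x. 0) at_top"
  proof (rule uniform_limitI)
    fix e :: real assume "0 < e"
    show "\<forall>\<^sub>F R in at_top. \<forall>x\<in>UNIV \<times> \<Omega>. dist (time_avg F R (snd x)) 0 < e"
      using eventually_gt_at_top[of "max 0 (B / e)"]
    proof (rule eventually_mono, safe)
      fix R \<theta> z0 assume R: "max 0 (B / e) < R" and "z0 \<in> \<Omega>"
      then have "B / R < e"
        using \<open>0 < e\<close> by (simp add: divide_less_eq mult.commute)
      then show "dist (time_avg F R (snd (\<theta>, z0))) 0 < e"
        using assms(3)[of R z0] R \<open>z0 \<in> \<Omega>\<close> by simp
    qed
  qed
qed (use assms in auto)

lemma uniformly_ergodic_character: "uniformly_ergodic (\<lambda>_::'q. \<lambda>z. Re (c * character n z))"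
proof -
  define F where "F z = Re (c * character n z)" for z
  define l where "l = (\<Sum>i\<in>UNIV. of_int (n i) * \<omega>$i)"
  have contF: "continuous_on \<Omega> F"
    unfolding F_def
    by (intro continuous_intros continuous_on_subset[OF continuous_on_character clock_Omega_subset_torus])
  have F_flow: "F (clock_flow \<omega> s z) = Re (c * character n z * cis (2 * pi * l * s))" for s z
    unfolding F_def l_def character_clock_flow by (simp add: mult_ac)
  txt \<open>If \<open>l = 0\<close>, \<open>F\<close> is constant along the orbit, hence on its closure \<open>\<Omega>\<close>. Otherwise the
    flow over half a period negates \<open>F\<close>, so its integral vanishes by invariance of \<open>\<pi>\<close>, and the
    time averages decay like \<open>1 / R\<close>.\<close>
  have "uniformly_ergodic (\<lambda>_::'q. F)"
  proof (cases "l = 0")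
    case True
    then have "F (clock \<omega> \<phi> t) = F (clock \<omega> \<phi> 0)" for t
      using F_flow[of t "clock \<omega> \<phi> 0"] by (simp add: F_def clock_eq_clock_flow[of _ _ t])
    then have "F z = F (clock \<omega> \<phi> 0)" if "z \<in> \<Omega>" for z
      using contF that unfolding clock_Omega_def by (auto intro: continuous_constant_on_closure)
    then show ?thesis
      by (rule uniformly_ergodic_constant)
  next
    case False
    have "F (clock_flow \<omega> (1 / (2 * l)) z) = - F z" for z
      using False unfolding F_flow by (simp add: F_def)
    then have "(\<integral>z. F z \<partial>\<pi>) = - (\<integral>z. F z \<partial>\<pi>)"
      using integral_clock_flow[OF borel_measurable_continuous_on_Omega[OF contF], of "1 / (2 * l)"] by simp
    then have "(\<integral>z. F z \<partial>\<pi>) = 0"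
      by simp
    moreover have "\<bar>time_avg F R z0\<bar> \<le> (norm c / (pi * \<bar>l\<bar>)) / R" if "0 < R" "z0 \<in> \<Omega>" for R z0
    proof -
      define I where "I = integral {0..R} (\<lambda>s. Re (c * character n z0 * cis (2 * pi * l * s)))"
      have "norm (character n z0) = 1"
        using that clock_Omega_subset_torus norm_character by blast
      then have "\<bar>I\<bar> \<le> 2 * norm c / \<bar>2 * pi * l\<bar>"
        using norm_integral_Re_cis_le[of "2 * pi * l" R "c * character n z0"] False \<open>0 < R\<close>
        unfolding I_def by (simp add: norm_mult)
      also have "\<dots> = norm c / (pi * \<bar>l\<bar>)"
        by (simp add: abs_mult)
      finally have "\<bar>I\<bar> \<le> norm c / (pi * \<bar>l\<bar>)" .
      moreover have "time_avg F R z0 = I / R"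
        unfolding time_avg_def F_flow I_def by simp
      ultimately show ?thesis
        using \<open>0 < R\<close> divide_right_mono[of "\<bar>I\<bar>" "norm c / (pi * \<bar>l\<bar>)" R] by (simp add: abs_divide)
    qed
    ultimately show ?thesis
      by (rule uniformly_ergodic_decay[OF contF])
  qed
  then show ?thesis
    unfolding F_def[abs_def] .
qed

lemma uniformly_ergodic_trig_poly:
  assumes "trig_poly g" shows "uniformly_ergodic (\<lambda>_::'q. g)"
proof -
  obtain cs where g: "\<And>z. z \<in> torus \<Longrightarrow> g z = (\<Sum>(c, n)\<leftarrow>cs. Re (c * character n z))"
    using assms unfolding trig_poly_def by blast
  have "uniformly_ergodic (\<lambda>_::'q. \<lambda>z. \<Sum>(c, n)\<leftarrow>cs. Re (c * character n z))"
  proof (induction cs)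
    case Nil
    then show ?case using uniformly_ergodic_zero by simp
  next
    case (Cons cn cs)
    obtain c n where "cn = (c, n)" by force
    then show ?case
      using uniformly_ergodic_add[OF uniformly_ergodic_character Cons.IH] by simp
  qed
  then show ?thesis
    by (rule uniformly_ergodic_cong) (simp add: g subsetD[OF clock_Omega_subset_torus])
qed

lemma uniformly_ergodic_continuous:
  fixes g :: "complex^'k \<Rightarrow> real"
  assumes "continuous_on \<Omega> g" shows "uniformly_ergodic (\<lambda>_::'q. g)"
proof (rule uniformly_ergodic_approx)
  fix e :: real assume "0 < e"
  then obtain p where p: "real_polynomial_function p" "\<And>z. z \<in> \<Omega> \<Longrightarrow> \<bar>g z - p z\<bar> < e"
    using Stone_Weierstrass_real_polynomial_function[OF compact_clock_Omega assms] by blast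
  then have "uniformly_ergodic (\<lambda>_::'q. p)"
    by (intro uniformly_ergodic_trig_poly real_polynomial_function_trig_poly)
  with p(2) show "\<exists>G. uniformly_ergodic G \<and> (\<forall>\<theta>::'q. \<forall>z\<in>\<Omega>. norm (g z - G \<theta> z) \<le> e)"
    by (intro exI[of _ "\<lambda>_. p"]) (auto intro: less_imp_le)
qed (rule assms)

lemma uniformly_ergodic_lipschitz_family:
  fixes G :: "complex^'k \<Rightarrow> 'b::metric_space" and u :: "'q \<Rightarrow> 'b \<Rightarrow> 'a::{banach,second_countable_topology}"
  assumes G: "continuous_on \<Omega> G"
    and lipschitz: "\<And>\<theta>. L-lipschitz_on (G ` \<Omega>) (u \<theta>)"
    and bounded: "\<And>\<xi>. \<xi> \<in> G ` \<Omega> \<Longrightarrow> bounded (range (\<lambda>\<theta>. u \<theta> \<xi>))"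
  shows "uniformly_ergodic (\<lambda>\<theta> z. u \<theta> (G z))"
proof (rule uniformly_ergodic_approx)
  txt \<open>A partition of unity of mesh \<open>\<delta>\<close> on \<open>G ` \<Omega>\<close> approximates \<open>u \<theta> (G z)\<close> by
    \<open>\<Sum>p\<in>P. \<psi> p (G z) *\<^sub>R u \<theta> p\<close> uniformly in \<open>\<theta>\<close>; each term is a continuous observable
    times a bounded coefficient.\<close>
  show "continuous_on \<Omega> (\<lambda>z. u \<theta> (G z))" for \<theta>
    by (rule continuous_on_compose2[OF lipschitz_on_continuous_on[OF lipschitz] G subset_refl])
  fix e :: real assume "0 < e"
  define \<delta> where "\<delta> = e / (L + 1)"
  have L: "0 \<le> L"
    using lipschitz_on_nonneg[OF lipschitz] .
  then have "0 < \<delta>" "L * \<delta> \<le> e"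
    using \<open>0 < e\<close> by (auto simp: \<delta>_def field_simps)
  obtain P and \<psi> :: "'b \<Rightarrow> 'b \<Rightarrow> real" where P: "finite P" "P \<subseteq> G ` \<Omega>" and cont: "\<And>p. continuous_on (G ` \<Omega>) (\<psi> p)"
    and nonneg: "\<And>p \<xi>. \<xi> \<in> G ` \<Omega> \<Longrightarrow> 0 \<le> \<psi> p \<xi>" and sum1: "\<And>\<xi>. \<xi> \<in> G ` \<Omega> \<Longrightarrow> (\<Sum>p\<in>P. \<psi> p \<xi>) = 1"
    and near: "\<And>p \<xi>. \<xi> \<in> G ` \<Omega> \<Longrightarrow> \<psi> p \<xi> \<noteq> 0 \<Longrightarrow> dist \<xi> p < \<delta>"
    by (rule compact_partition_of_unity[OF compact_continuous_image[OF G compact_clock_Omega] \<open>0 < \<delta>\<close>]) blast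
  have "uniformly_ergodic (\<lambda>\<theta> z. \<Sum>p\<in>P. \<psi> p (G z) *\<^sub>R u \<theta> p)"
  proof (intro uniformly_ergodic_sum uniformly_ergodic_scaleR uniformly_ergodic_continuous P(1))
    show "continuous_on \<Omega> (\<lambda>z. \<psi> p (G z))" for p
      using continuous_on_compose2[OF cont G] by blast
    show "bounded (range (\<lambda>\<theta>. u \<theta> p))" if "p \<in> P" for p
      using bounded P(2) that by blast
  qed
  moreover have "norm (u \<theta> (G z) - (\<Sum>p\<in>P. \<psi> p (G z) *\<^sub>R u \<theta> p)) \<le> e" if "z \<in> \<Omega>" for \<theta> z
  proof -
    have \<xi>: "G z \<in> G ` \<Omega>"
      using that by blast
    show ?thesis
      using lipschitz_partition_of_unity_approx[where \<psi>=\<psi> and \<delta>=\<delta>,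
          OF lipschitz[of \<theta>] P \<xi> nonneg[OF \<xi>] sum1[OF \<xi>] near[OF \<xi>]]
        \<open>L * \<delta> \<le> e\<close> by linarith
  qed
  ultimately show "\<exists>H. uniformly_ergodic H \<and> (\<forall>\<theta>. \<forall>z\<in>\<Omega>. norm (u \<theta> (G z) - H \<theta> z) \<le> e)"
    by blast
qed

lemma tendsto_SUP_zero:
  fixes err :: "real \<Rightarrow> 'x \<Rightarrow> real"
  assumes "S \<noteq> {}" "\<And>R x. x \<in> S \<Longrightarrow> 0 \<le> err R x" "\<And>R. bdd_above (err R ` S)"
    and "\<And>e. 0 < e \<Longrightarrow> \<forall>\<^sub>F R in F. \<forall>x\<in>S. err R x < e"
  shows "((\<lambda>R. SUP x\<in>S. err R x) \<longlongrightarrow> 0) F"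
proof (rule tendstoI)
  fix e :: real assume "0 < e"
  then have "\<forall>\<^sub>F R in F. \<forall>x\<in>S. err R x < e / 2"
    by (intro assms(4)) simp
  then show "\<forall>\<^sub>F R in F. dist (SUP x\<in>S. err R x) 0 < e"
  proof (rule eventually_mono)
    fix R assume "\<forall>x\<in>S. err R x < e / 2"
    then have "(SUP x\<in>S. err R x) \<le> e / 2"
      using assms(1) by (intro cSUP_least) (auto simp: less_imp_le)
    moreover obtain x where "x \<in> S"
      using assms(1) by blast
    then have "0 \<le> (SUP x\<in>S. err R x)"
      using assms(2) cSUP_upper[OF _ assms(3)] order_trans by blast
    ultimately show "dist (SUP x\<in>S. err R x) 0 < e"
      using \<open>0 < e\<close> by simp
  qed
qed

lemma uniformly_ergodic_rate:
  fixes F :: "'q \<Rightarrow> complex^'k \<Rightarrow> 'a::{banach,second_countable_topology}"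
  assumes F: "uniformly_ergodic F" and bound: "\<And>\<theta> z. z \<in> \<Omega> \<Longrightarrow> norm (F \<theta> z) \<le> B"
  shows "\<exists>\<epsilon>. (\<forall>R. 0 \<le> \<epsilon> R) \<and> (\<epsilon> \<longlongrightarrow> 0) at_top \<and>
           (\<forall>\<theta> R. \<forall>z0\<in>\<Omega>. dist (time_avg (F \<theta>) R z0) (\<integral>z. F \<theta> z \<partial>\<pi>) \<le> \<epsilon> R)"
proof (intro exI conjI allI ballI)
  define err where "err R x = dist (time_avg (F (fst x)) R (snd x)) (\<integral>z. F (fst x) z \<partial>\<pi>)" for R x
  have bdd: "bdd_above (err R ` (UNIV \<times> \<Omega>))" for R
  proof (rule bdd_aboveI2)
    fix x :: "'q \<times> (complex^'k)" assume "x \<in> UNIV \<times> \<Omega>"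
    then have "norm (time_avg (F (fst x)) R (snd x)) \<le> B" "norm (\<integral>z. F (fst x) z \<partial>\<pi>) \<le> B"
      using norm_time_avg_le[OF uniformly_ergodicD(1)[OF F] _ bound] norm_integral_le(2)[OF uniformly_ergodicD(1)[OF F] bound]
      by auto
    moreover have "err R x \<le> norm (time_avg (F (fst x)) R (snd x)) + norm (\<integral>z. F (fst x) z \<partial>\<pi>)"
      unfolding err_def dist_norm by (rule norm_triangle_ineq4)
    ultimately show "err R x \<le> B + B"
      by linarith
  qed
  show "dist (time_avg (F \<theta>) R z0) (\<integral>z. F \<theta> z \<partial>\<pi>) \<le> (SUP x\<in>UNIV \<times> \<Omega>. err R x)" if "z0 \<in> \<Omega>" for \<theta> R z0
    using cSUP_upper[OF _ bdd, of "(\<theta>, z0)" R] that unfolding err_def by simp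
  show "0 \<le> (SUP x\<in>UNIV \<times> \<Omega>. err R x)" for R
  proof -
    have "0 \<le> err R (undefined, clock \<omega> \<phi> 0)"
      by (simp add: err_def)
    also have "\<dots> \<le> (SUP x\<in>UNIV \<times> \<Omega>. err R x)"
      by (rule cSUP_upper[OF _ bdd]) (simp add: clock_in_clock_Omega)
    finally show ?thesis .
  qed
  show "((\<lambda>R. SUP x\<in>UNIV \<times> \<Omega>. err R x) \<longlongrightarrow> 0) at_top"
  proof (rule tendsto_SUP_zero[OF _ _ bdd])
    show "UNIV \<times> \<Omega> \<noteq> {}"
      using clock_in_clock_Omega by blast
    show "\<forall>\<^sub>F R in at_top. \<forall>x\<in>UNIV \<times> \<Omega>. err R x < e" if "0 < e" for e
      using F that unfolding uniformly_ergodic_def err_def by (auto dest!: uniform_limitD[where e=e])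
  qed (simp add: err_def)
qed

lemma uniform_averaging_estimate:
  fixes G :: "complex^'k \<Rightarrow> 'b::real_normed_vector"
    and f :: "'p::real_normed_vector \<Rightarrow> 'b \<Rightarrow> 'a::{banach,second_countable_topology}"
  assumes G: "continuous_on \<Omega> G"
    and f: "\<forall>\<theta> \<theta>' \<xi> \<xi>'. norm (f \<theta>' \<xi> - f \<theta> \<xi>) + norm (f \<theta> \<xi>' - f \<theta> \<xi>)
                    \<le> L * (norm (\<theta>' - \<theta>) + norm (\<xi>' - \<xi>))"
  shows "\<exists>\<epsilon>. (\<forall>R. 0 \<le> \<epsilon> R) \<and> (\<epsilon> \<longlongrightarrow> 0) at_top \<and>
           (\<forall>\<theta> R. \<forall>z0\<in>\<Omega>. dist (time_avg (\<lambda>z. f \<theta> (G z)) R z0) (\<integral>z. f \<theta> (G z) \<partial>\<pi>) \<le> (1 + norm \<theta>) * \<epsilon> R)"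
proof -
  define u where "u \<theta> \<xi> = (1 / (1 + norm \<theta>)) *\<^sub>R f \<theta> \<xi>" for \<theta> \<xi>
  have pos: "0 < 1 + norm \<theta>" for \<theta> :: 'p
    by (simp add: add_pos_nonneg)
  have u_lipschitz: "\<bar>L\<bar>-lipschitz_on (G ` \<Omega>) (u \<theta>)" for \<theta>
  proof -
    have "\<bar>1 / (1 + norm \<theta>)\<bar> \<le> 1"
      using pos[of \<theta>] by (simp add: divide_le_eq_1)
    then show ?thesis
      using lipschitz_on_cmult_upper[OF lipschitz_on_joint_bound[OF f]] unfolding u_def by fastforce
  qed
  have "norm (u \<theta> \<xi>) \<le> norm (f 0 \<xi>) + \<bar>L\<bar>" for \<theta> \<xi>
    using norm_le_linear_growth_joint_bound[OF f, of \<theta> \<xi>] pos[of \<theta>] unfolding u_def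
    by (simp add: field_simps)
  then have u_bounded: "bounded (range (\<lambda>\<theta>. u \<theta> \<xi>))" for \<xi>
    unfolding bounded_iff by blast
  have ergodic: "uniformly_ergodic (\<lambda>\<theta> z. u \<theta> (G z))"
    using G u_lipschitz u_bounded by (rule uniformly_ergodic_lipschitz_family)
  obtain B where B: "\<And>\<theta> z. z \<in> \<Omega> \<Longrightarrow> norm (u \<theta> (G z)) \<le> B"
    by (rule bounded_lipschitz_family[OF compact_continuous_image[OF G compact_clock_Omega] u_lipschitz u_bounded])
       blast
  obtain \<epsilon> :: "real \<Rightarrow> real" where \<epsilon>: "\<forall>R. 0 \<le> \<epsilon> R" "(\<epsilon> \<longlongrightarrow> 0) at_top"
    "\<forall>\<theta> R. \<forall>z0\<in>\<Omega>. dist (time_avg (\<lambda>z. u \<theta> (G z)) R z0) (\<integral>z. u \<theta> (G z) \<partial>\<pi>) \<le> \<epsilon> R"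
    using uniformly_ergodic_rate[OF ergodic B] by blast
  have "f \<theta> \<xi> = (1 + norm \<theta>) *\<^sub>R u \<theta> \<xi>" for \<theta> \<xi>
    using pos[of \<theta>] unfolding u_def by simp
  then have "dist (time_avg (\<lambda>z. f \<theta> (G z)) R z0) (\<integral>z. f \<theta> (G z) \<partial>\<pi>)
      = (1 + norm \<theta>) * dist (time_avg (\<lambda>z. u \<theta> (G z)) R z0) (\<integral>z. u \<theta> (G z) \<partial>\<pi>)" for \<theta> R z0
    using pos[of \<theta>] by (simp add: time_avg_scaleR_right dist_norm flip: scaleR_diff_right)
  with \<epsilon> pos show ?thesis
    by (intro exI[of _ \<epsilon>]) (auto intro: mult_left_mono)
qed

end

theorem lemmaA1:
  fixes \<omega> \<phi> :: "real^'k"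
    and G0 :: "real^'k \<Rightarrow> real^'m"
    and c :: "('k \<Rightarrow> nat) \<Rightarrow> real^'m"
    and f :: "real^'d \<Rightarrow> real^'m \<Rightarrow> real^'d"
    and \<pi> :: "(complex^'k) measure"
    and L\<^sub>f :: real
  assumes \<omega>_pos: "\<forall>i. \<omega>$i > 0"
    and G0_coeffs: "(\<lambda>a. norm (c a)) summable_on UNIV"
    and G0_series: "\<forall>x::real^'k. (\<forall>i. \<bar>x$i\<bar> \<le> 1) \<longrightarrow>
                 ((\<lambda>a. (\<Prod>i\<in>UNIV. (x$i) ^ (a i)) *\<^sub>R c a) has_sum G0 x) UNIV"
    and haar: "is_haar_on_Omega \<omega> \<phi> \<pi>"
    and f_cont: "continuous_on UNIV (\<lambda>(\<theta>, \<xi>). f \<theta> \<xi>)"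
    and A1_bar: "\<forall>\<theta> \<theta>'. norm ((\<integral>z. f \<theta>' (probe_G G0 z) \<partial>\<pi>) - (\<integral>z. f \<theta> (probe_G G0 z) \<partial>\<pi>))
                    \<le> L\<^sub>f * norm (\<theta>' - \<theta>)"
    and A1_f: "\<forall>\<theta> \<theta>' \<xi> \<xi>'. norm (f \<theta>' \<xi> - f \<theta> \<xi>) + norm (f \<theta> \<xi>' - f \<theta> \<xi>)
                    \<le> L\<^sub>f * (norm (\<theta>' - \<theta>) + norm (\<xi>' - \<xi>))"
  shows "\<exists>\<epsilon> :: real \<Rightarrow> real.
           (\<forall>r>0. \<epsilon> r \<ge> 0) \<and> (\<epsilon> \<longlongrightarrow> 0) at_top \<and>
           (\<forall>\<theta> :: real^'d. \<forall>z0 \<in> clock_Omega \<omega> \<phi>. \<forall>T>0. \<forall>\<alpha>>0.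
              norm ((1 / T) *\<^sub>R integral {0..T}
                 (\<lambda>t. f \<theta> (probe_G G0 (clock_flow \<omega> (t / \<alpha>) z0))
                       - (\<integral>z. f \<theta> (probe_G G0 z) \<partial>\<pi>)))
              \<le> (1 + norm \<theta>) * \<epsilon> (T / \<alpha>))"
proof -
  interpret haar_clock \<omega> \<phi> \<pi>
    by (rule haar_clock.intro[OF haar])
  have G: "continuous_on \<Omega> (probe_G G0)"
    using continuous_on_probe_G[OF continuous_on_power_series_cube[OF G0_coeffs G0_series]]
      clock_Omega_subset_torus by (rule continuous_on_subset)
  obtain \<epsilon> :: "real \<Rightarrow> real" where \<epsilon>: "\<forall>R. 0 \<le> \<epsilon> R" "(\<epsilon> \<longlongrightarrow> 0) at_top"
    "\<forall>\<theta> R. \<forall>z0\<in>\<Omega>. dist (time_avg (\<lambda>z. f \<theta> (probe_G G0 z)) R z0) (\<integral>z. f \<theta> (probe_G G0 z) \<partial>\<pi>)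
       \<le> (1 + norm \<theta>) * \<epsilon> R"
    using uniform_averaging_estimate[OF G A1_f] by blast
  have cont: "continuous_on \<Omega> (\<lambda>z. f \<theta> (probe_G G0 z))" for \<theta>
    using lipschitz_on_continuous_on[OF lipschitz_on_joint_bound[OF A1_f, where A=UNIV]] G
    by (rule continuous_on_compose2) simp
  show ?thesis
  proof (intro exI[of _ \<epsilon>] conjI allI impI ballI)
    show "0 \<le> \<epsilon> r" "(\<epsilon> \<longlongrightarrow> 0) at_top" for r
      using \<epsilon>(1,2) by auto
    fix \<theta> z0 and T \<alpha> :: real
    assume "z0 \<in> \<Omega>" "0 < T" "0 < \<alpha>"
    then show "norm ((1 / T) *\<^sub>R integral {0..T} (\<lambda>t. f \<theta> (probe_G G0 (clock_flow \<omega> (t / \<alpha>) z0))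
                 - (\<integral>z. f \<theta> (probe_G G0 z) \<partial>\<pi>))) \<le> (1 + norm \<theta>) * \<epsilon> (T / \<alpha>)"
      unfolding time_avg_rescale[OF cont \<open>z0 \<in> \<Omega>\<close> \<open>0 < T\<close> \<open>0 < \<alpha>\<close>]
      using \<epsilon>(3) by (simp add: dist_norm)
  qed
qed

end
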